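(* Let $N,M$ be positive integers with $M>N$, $t$ a complex parameter, $w(x)=e^{-\frac{M}{2}x}x^{\frac{M-N-1}{2}}(t-x)^{-\frac12}$, $L_k$ the monic orthogonal polynomials of degree $k$ on $(0,\infty)$ for the weight $w_0(x)=x^{M-N}e^{-Mx}$, and $\langle\cdot,\cdot\rangle_1$ the skew product defined below. Every polynomial $P$ can be written uniquely as $$P(x)=\frac{d}{dx}\big(q(x)x(t-x)w(x)\big)w^{-1}(x)+R(x)$$ with $q$ a polynomial and $R$ a polynomial of degree at most $1$; let $f$ be the linear map $P\mapsto R$, and let $\varrho_k$ be the restriction of $f$ to the linear span of $L_k$ and $L_{k-1}$. If $\langle L_k,L_{k-1}\rangle_1\neq0$, then $\varrho_k$ is invertible (as a linear map from $\mathrm{span}\{L_k,L_{k-1}\}$ onto the polynomials of degree at most $1$).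
   Context: The skew product is $\langle f,g\rangle_1=\int_0^\infty\int_0^\infty\epsilon(x-y)f(x)g(y)w(x)w(y)\,dx\,dy$ with $\epsilon(x)=\frac12\mathrm{sgn}(x)$; the branch of $(t-x)^{-1/2}$ has its cut on $\arg(t-x)=\pi$, and if $t\in(0,\infty)$ the contour $(0,\infty)$ is deformed into the upper or lower half plane near $t$. *)

theory Defs
  imports "HOL-Analysis.Analysis" "HOL-Computational_Algebra.Polynomial"
begin

text \<open>Off the cut (-oo,0] the principal branch is used.  On the cut z = -r (r > 0)
  the boundary value is taken: \<sigma> = True means the contour is deformed into the
  upper half plane (so Im(t-x) < 0, limit from below the cut, value i/sqrt r),
  \<sigma> = False means the lower half plane (value -i/sqrt r).\<close>
definition br :: "bool \<Rightarrow> complex \<Rightarrow> complex" where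
  "br \<sigma> z = (if Im z = 0 \<and> Re z < 0
      then (if \<sigma> then \<i> else - \<i>) / complex_of_real (sqrt (- Re z))
      else z powr (-1/2))"

definition wgt :: "nat \<Rightarrow> nat \<Rightarrow> complex \<Rightarrow> bool \<Rightarrow> real \<Rightarrow> complex" where
  "wgt M N t \<sigma> x = complex_of_real (exp (- real M * x / 2) * x powr ((real M - real N - 1) / 2))
                    * br \<sigma> (t - complex_of_real x)"

definition skew :: "nat \<Rightarrow> nat \<Rightarrow> complex \<Rightarrow> bool \<Rightarrow> complex poly \<Rightarrow> complex poly \<Rightarrow> complex" where
  "skew M N t \<sigma> f g =
     (LINT y:{0<..}|lborel. (LINT x:{0<..}|lborel.
        complex_of_real (sgn (x - y) / 2) * poly f (complex_of_real x) * poly g (complex_of_real y)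
        * wgt M N t \<sigma> x * wgt M N t \<sigma> y))"

definition Dop :: "nat \<Rightarrow> nat \<Rightarrow> complex \<Rightarrow> bool \<Rightarrow> complex poly \<Rightarrow> complex poly" where
  "Dop M N t \<sigma> q = (THE P. \<forall>x::real. x > 0 \<and> complex_of_real x \<noteq> t \<longrightarrow>
      ((\<lambda>s. poly q (complex_of_real s) * complex_of_real s * (t - complex_of_real s) * wgt M N t \<sigma> s)
        has_vector_derivative (poly P (complex_of_real x) * wgt M N t \<sigma> x)) (at x))"

definition fmap :: "nat \<Rightarrow> nat \<Rightarrow> complex \<Rightarrow> bool \<Rightarrow> complex poly \<Rightarrow> complex poly" where
  "fmap M N t \<sigma> P = (THE R. degree R \<le> 1 \<and> (\<exists>q. P = Dop M N t \<sigma> q + R))"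

definition w0 :: "nat \<Rightarrow> nat \<Rightarrow> real \<Rightarrow> real" where
  "w0 M N x = x ^ (M - N) * exp (- real M * x)"

end

theory Submission
  imports Defs "HOL-Real_Asymp.Real_Asymp"
begin

text \<open>
  Write \<open>(q x (t - x) w)' = (D q) w\<close>. The polynomial \<open>D q\<close> has degree \<open>deg q + 2\<close> and leading
  coefficient \<open>M/2\<close> times that of \<open>q\<close>, which gives the unique decomposition \<open>P = D q + R\<close>
  with \<open>deg R \<le> 1\<close>. Integrating by parts in the inner integral of \<open>\<langle>D q, g\<rangle>\<^sub>1\<close>, where the
  primitive \<open>q x (t - x) w\<close> vanishes at \<open>0\<close> and \<open>\<infinity>\<close> and is continuous at the branch point,
  gives \<open>\<langle>D q, g\<rangle>\<^sub>1 = -\<integral> q g x (t - x) w\<^sup>2 = -\<integral> q g w\<^sub>0\<close>.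
  If \<open>f (a L\<^sub>k + b L\<^sub>k\<^sub>-\<^sub>1) = 0\<close> then \<open>a L\<^sub>k + b L\<^sub>k\<^sub>-\<^sub>1 = D q\<close> with \<open>deg q \<le> k - 2\<close>, so by
  orthogonality its skew products with \<open>L\<^sub>k\<^sub>-\<^sub>1\<close> and \<open>L\<^sub>k\<close> vanish; by skew symmetry these are
  \<open>a \<langle>L\<^sub>k, L\<^sub>k\<^sub>-\<^sub>1\<rangle>\<^sub>1\<close> and \<open>-b \<langle>L\<^sub>k, L\<^sub>k\<^sub>-\<^sub>1\<rangle>\<^sub>1\<close>. So \<open>f\<close> is injective on the span, hence bijective
  onto the two-dimensional space of polynomials of degree at most 1.
\<close>

section \<open>Polynomial algebra\<close>

definition diff_op :: "'a::idom poly \<Rightarrow> 'a poly \<Rightarrow> 'a poly \<Rightarrow> 'a poly" where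
  "diff_op A B q = pderiv (q * A) + q * B"

lemma diff_op_0 [simp]: "diff_op A B 0 = 0"
  by (simp add: diff_op_def)

lemma diff_op_add: "diff_op A B (p + q) = diff_op A B p + diff_op A B q"
  by (simp add: diff_op_def distrib_right pderiv_add algebra_simps)

lemma diff_op_diff: "diff_op A B (p - q) = diff_op A B p - diff_op A B (q :: 'a::idom poly)"
  by (simp add: diff_op_def left_diff_distrib pderiv_diff algebra_simps)

lemma diff_op_smult: "diff_op A B (smult c q) = smult c (diff_op A B q)"
  by (simp add: diff_op_def pderiv_smult smult_add_right)

lemma degree_diff_op:
  fixes A B q :: "'a::{idom,ring_char_0} poly"
  assumes "degree A \<le> 2" "degree B = 2" "q \<noteq> 0"
  shows "degree (diff_op A B q) = degree q + 2"
    and "lead_coeff (diff_op A B q) = lead_coeff q * lead_coeff B"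
proof -
  have B: "B \<noteq> 0" using assms(2) by auto
  have qB: "degree (q * B) = degree q + 2" using assms B by (simp add: degree_mult_eq)
  have "degree (pderiv (q * A)) \<le> degree q + 1"
    using degree_mult_le[of q A] assms(1) by (simp add: degree_pderiv)
  then have lt: "degree (pderiv (q * A)) < degree (q * B)" using qB by simp
  show deg: "degree (diff_op A B q) = degree q + 2"
    unfolding diff_op_def using degree_add_eq_right[OF lt] qB by simp
  have "coeff (pderiv (q * A)) (degree q + 2) = 0" using lt qB by (intro coeff_eq_0) simp
  then show "lead_coeff (diff_op A B q) = lead_coeff q * lead_coeff B"
    unfolding deg unfolding diff_op_def using coeff_mult_degree_sum[of q B] assms(2) by simp
qed

lemma diff_op_decomposition:
  fixes A B P :: "'a::field_char_0 poly"
  assumes "degree A \<le> 2" "degree B = 2"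
  shows "\<exists>q R. degree R \<le> 1 \<and> P = diff_op A B q + R"
proof (induction "degree P" arbitrary: P rule: less_induct)
  case less
  show ?case
  proof (cases "degree P \<le> 1")
    case True
    then show ?thesis by (intro exI[of _ 0] exI[of _ P]) simp
  next
    case False
    define q where "q = monom (lead_coeff P / lead_coeff B) (degree P - 2)"
    have "lead_coeff B \<noteq> 0" "P \<noteq> 0" using assms(2) False by (auto simp del: leading_coeff_0_iff)
      (metis leading_coeff_0_iff degree_0 zero_neq_numeral)
    have q: "q \<noteq> 0" "degree P = degree q + 2" "lead_coeff q * lead_coeff B = lead_coeff P"
      using False \<open>lead_coeff B \<noteq> 0\<close> \<open>P \<noteq> 0\<close> by (simp_all add: q_def degree_monom_eq)
    then have Dq: "degree (diff_op A B q) = degree P" "lead_coeff (diff_op A B q) = lead_coeff P"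
      using degree_diff_op[OF assms q(1)] by simp_all
    \<comment> \<open>subtracting \<open>diff_op A B q\<close> cancels the leading term of \<open>P\<close>\<close>
    have "degree (P - diff_op A B q) \<le> degree P" "coeff (P - diff_op A B q) (degree P) = 0"
      using Dq by (auto intro: degree_diff_le)
    moreover have "degree (P - diff_op A B q) \<noteq> degree P"
    proof
      assume deg_eq: "degree (P - diff_op A B q) = degree P"
      then have "P - diff_op A B q = 0" using \<open>coeff (P - diff_op A B q) (degree P) = 0\<close>
        by (metis leading_coeff_0_iff)
      then show False using deg_eq False by simp
    qed
    ultimately have "degree (P - diff_op A B q) < degree P" by simp
    then obtain q' R where "degree R \<le> 1" "P - diff_op A B q = diff_op A B q' + R"
      using less by blast
    then show ?thesis by (intro exI[of _ "q' + q"] exI[of _ R]) (auto simp: diff_op_add algebra_simps)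
  qed
qed

lemma diff_op_decomposition_unique:
  fixes A B :: "'a::{idom,ring_char_0} poly"
  assumes "degree A \<le> 2" "degree B = 2" "degree R1 \<le> 1" "degree R2 \<le> 1"
    and "diff_op A B q1 + R1 = diff_op A B q2 + R2"
  shows "q1 = q2" "R1 = R2"
proof -
  have "diff_op A B (q1 - q2) = R2 - R1" using assms(5) by (simp add: diff_op_diff algebra_simps)
  moreover have "degree (R2 - R1) \<le> 1" using assms(3,4) by (meson degree_diff_le)
  ultimately show "q1 = q2" using degree_diff_op[OF assms(1,2), of "q1 - q2"] by fastforce
  then show "R1 = R2" using assms(5) by simp
qed

lemma poly_eqI_infinite:
  fixes p q :: "'a::idom poly"
  assumes "infinite A" "\<And>x. x \<in> A \<Longrightarrow> poly p x = poly q x"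
  shows "p = q"
proof (rule ccontr)
  assume "p \<noteq> q"
  then have "finite {x. poly (p - q) x = 0}" by (intro poly_roots_finite) simp
  moreover have "A \<subseteq> {x. poly (p - q) x = 0}" using assms(2) by auto
  ultimately show False using assms(1) finite_subset by blast
qed

lemma degree_le_1_eqI:
  assumes "degree p \<le> 1" "degree q \<le> 1" "coeff p 0 = coeff q 0" "coeff p 1 = coeff q 1"
  shows "p = q"
proof (rule poly_eqI)
  fix n
  show "coeff p n = coeff q n"
    using assms coeff_eq_0[of p n] coeff_eq_0[of q n] by (cases "n \<le> 1") (auto simp: le_Suc_eq)
qed

lemma degree_le_1_independent_det_nonzero:
  fixes r1 r2 :: "'a::field poly"
  assumes r: "degree r1 \<le> 1" "degree r2 \<le> 1"
    and indep: "\<And>a b. smult a r1 + smult b r2 = 0 \<Longrightarrow> a = 0 \<and> b = 0"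
  shows "coeff r1 0 * coeff r2 1 - coeff r1 1 * coeff r2 0 \<noteq> 0"
proof
  have comb: "degree (smult a r1 + smult b r2) \<le> 1" for a b
    using r by (intro degree_add_le order.trans[OF degree_smult_le]) auto
  have zero: "a = 0 \<and> b = 0" if "a * coeff r1 0 + b * coeff r2 0 = 0" "a * coeff r1 1 + b * coeff r2 1 = 0" for a b
    using that by (intro indep degree_le_1_eqI[OF comb]) simp_all
  assume "coeff r1 0 * coeff r2 1 - coeff r1 1 * coeff r2 0 = 0"
  then have 1: "coeff r2 1 = 0" "coeff r1 1 = 0"
    using zero[of "coeff r2 1" "- coeff r1 1"] by (simp_all add: mult.commute)
  then have "coeff r2 0 = 0" "coeff r1 0 = 0"
    using zero[of "coeff r2 0" "- coeff r1 0"] by (simp_all add: mult.commute)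
  then show False using zero[of 1 0] 1 by simp
qed

lemma degree_le_1_span:
  fixes r1 r2 R :: "'a::field poly"
  assumes r: "degree r1 \<le> 1" "degree r2 \<le> 1"
    and indep: "\<And>a b. smult a r1 + smult b r2 = 0 \<Longrightarrow> a = 0 \<and> b = 0"
    and R: "degree R \<le> 1"
  shows "\<exists>a b. R = smult a r1 + smult b r2"
proof -
  have comb: "degree (smult a r1 + smult b r2) \<le> 1" for a b
    using r by (intro degree_add_le order.trans[OF degree_smult_le]) auto
  define d where "d = coeff r1 0 * coeff r2 1 - coeff r1 1 * coeff r2 0"
  have "d \<noteq> 0" unfolding d_def by (rule degree_le_1_independent_det_nonzero[OF r indep])
  define a where "a = (coeff R 0 * coeff r2 1 - coeff R 1 * coeff r2 0) / d"
  define b where "b = (coeff r1 0 * coeff R 1 - coeff r1 1 * coeff R 0) / d"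
  have cramer: "X / d * c + Y / d * e = Z" if "X * c + Y * e = Z * d" for X Y Z c e
  proof -
    have "X / d * c + Y / d * e = (X * c + Y * e) / d" by (simp add: add_divide_distrib)
    then show ?thesis using that \<open>d \<noteq> 0\<close> by simp
  qed
  have "(coeff R 0 * coeff r2 1 - coeff R 1 * coeff r2 0) * coeff r1 0
      + (coeff r1 0 * coeff R 1 - coeff r1 1 * coeff R 0) * coeff r2 0 = coeff R 0 * d"
    by (simp add: d_def algebra_simps)
  from cramer[OF this] have "coeff (smult a r1 + smult b r2) 0 = coeff R 0"
    by (simp add: a_def b_def)
  moreover have "(coeff R 0 * coeff r2 1 - coeff R 1 * coeff r2 0) * coeff r1 1
      + (coeff r1 0 * coeff R 1 - coeff r1 1 * coeff R 0) * coeff r2 1 = coeff R 1 * d"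
    by (simp add: d_def algebra_simps)
  from cramer[OF this] have "coeff (smult a r1 + smult b r2) 1 = coeff R 1"
    by (simp add: a_def b_def)
  ultimately have "R = smult a r1 + smult b r2"
    by (intro degree_le_1_eqI[OF R comb]) simp_all
  then show ?thesis by blast
qed

lemma bij_betw_span_degree_le_1:
  fixes F :: "'a::field poly \<Rightarrow> 'a poly"
  assumes F: "\<And>a b. F (smult a P1 + smult b P2) = smult a (F P1) + smult b (F P2)"
    and deg: "degree (F P1) \<le> 1" "degree (F P2) \<le> 1"
    and indep: "\<And>a b. smult a (F P1) + smult b (F P2) = 0 \<Longrightarrow> a = 0 \<and> b = 0"
  shows "bij_betw F {smult a P1 + smult b P2 | a b. True} {R. degree R \<le> 1}"
proof (rule bij_betw_imageI)
  show "inj_on F {smult a P1 + smult b P2 | a b. True}"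
  proof (rule inj_onI, clarify)
    fix a1 b1 a2 b2
    assume "F (smult a1 P1 + smult b1 P2) = F (smult a2 P1 + smult b2 P2)"
    then have "smult (a1 - a2) (F P1) + smult (b1 - b2) (F P2) = 0"
      by (simp add: F smult_diff_left algebra_simps)
    then show "smult a1 P1 + smult b1 P2 = smult a2 P1 + smult b2 P2" using indep by fastforce
  qed
  show "F ` {smult a P1 + smult b P2 | a b. True} = {R. degree R \<le> 1}"
  proof
    show "F ` {smult a P1 + smult b P2 | a b. True} \<subseteq> {R. degree R \<le> 1}"
      using deg by (auto simp: F intro!: degree_add_le order.trans[OF degree_smult_le])
    show "{R. degree R \<le> 1} \<subseteq> F ` {smult a P1 + smult b P2 | a b. True}"
    proof
      fix R :: "'a poly" assume "R \<in> {R. degree R \<le> 1}"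
      then obtain a b where "R = smult a (F P1) + smult b (F P2)"
        using degree_le_1_span[OF deg indep] by blast
      then have "R = F (smult a P1 + smult b P2)" by (simp add: F)
      then show "R \<in> F ` {smult a P1 + smult b P2 | a b. True}" by blast
    qed
  qed
qed

section \<open>Elementary estimates\<close>

lemma poly_growth:
  fixes p :: "'a::real_normed_field poly"
  shows "\<exists>C n. C \<ge> 0 \<and> (\<forall>x\<ge>0. norm (poly p (of_real x)) \<le> C * (1 + x) ^ n)"
proof (induction p)
  case 0
  then show ?case by (intro exI[of _ 0]) simp
next
  case (pCons a p)
  then obtain C n where C: "C \<ge> 0" "\<forall>x\<ge>0. norm (poly p (of_real x)) \<le> C * (1 + x) ^ n" by blast
  show ?case
  proof (intro exI[of _ "norm a + C"] exI[of _ "Suc n"] conjI allI impI)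
    fix x :: real assume x: "x \<ge> 0"
    have "norm (poly (pCons a p) (of_real x)) \<le> norm a + x * norm (poly p (of_real x))"
      using x by (simp add: norm_triangle_le norm_mult)
    also have "\<dots> \<le> norm a * (1 + x) ^ Suc n + (1 + x) * (C * (1 + x) ^ n)"
    proof (intro add_mono mult_mono)
      have "1 \<le> (1 + x) ^ Suc n" using x by (intro one_le_power) simp
      then show "norm a \<le> norm a * (1 + x) ^ Suc n" by (simp add: mult_le_cancel_left1)
    qed (use C x in auto)
    finally show "norm (poly (pCons a p) (of_real x)) \<le> (norm a + C) * (1 + x) ^ Suc n"
      by (simp add: algebra_simps)
  qed (use C in simp)
qed

lemma power_div_fact_le_exp: "0 \<le> (x::real) \<Longrightarrow> x ^ n / fact n \<le> exp x"
proof -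
  assume "0 \<le> x"
  then have "x ^ n / fact n \<le> (\<Sum>i\<le>n. x ^ i / fact i)"
    by (intro member_le_sum) auto
  also have "\<dots> \<le> exp x"
    using \<open>0 \<le> x\<close> summable_exp_generic[of x]
    by (auto simp: exp_def divide_inverse ac_simps intro!: sum_le_suminf)
  finally show ?thesis .
qed

lemma poly_exp_decay_bound:
  fixes p :: "'a::real_normed_field poly"
  assumes "c > 0" "a \<ge> 0"
  shows "\<exists>C\<ge>0. \<forall>x>0. norm (poly p (of_real x)) * (exp (- c * x) * x powr a) \<le> C * exp (- (c / 2) * x)"
proof -
  obtain C n where C: "C \<ge> 0" "\<forall>x\<ge>0. norm (poly p (of_real x)) \<le> C * (1 + x) ^ n"
    using poly_growth by blast
  define K where "K = n + nat \<lceil>a\<rceil>"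
  define C' where "C' = C * fact K * exp (c / 2) / (c / 2) ^ K"
  show ?thesis
  proof (intro exI[of _ C'] conjI allI impI)
    show "C' \<ge> 0" using C assms by (simp add: C'_def)
    fix x :: real assume x: "x > 0"
    have "x powr a \<le> (1 + x) powr real (nat \<lceil>a\<rceil>)"
      using x assms by (intro order.trans[OF powr_mono2 powr_mono]) auto
    then have xa: "x powr a \<le> (1 + x) ^ nat \<lceil>a\<rceil>"
      using x by (simp add: powr_realpow)
    have "0 \<le> c / 2 * (1 + x)" using x assms by simp
    from power_div_fact_le_exp[OF this, of K]
    have "(c / 2) ^ K * (1 + x) ^ K / fact K \<le> exp (c / 2 * (1 + x))"
      by (simp only: power_mult_distrib)
    also have "exp (c / 2 * (1 + x)) = exp (c / 2) * exp (c / 2 * x)"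
      by (simp add: distrib_left exp_add)
    finally have pK: "(1 + x) ^ K \<le> fact K * exp (c / 2) / (c / 2) ^ K * exp (c / 2 * x)"
      using assms by (simp add: field_simps)
    have "norm (poly p (of_real x)) * (exp (- c * x) * x powr a)
        \<le> C * (1 + x) ^ n * (exp (- c * x) * (1 + x) ^ nat \<lceil>a\<rceil>)"
      using C x xa by (intro mult_mono) auto
    also have "\<dots> = C * (1 + x) ^ K * exp (- c * x)"
      by (simp add: K_def power_add algebra_simps)
    also have "\<dots> \<le> C * (fact K * exp (c / 2) / (c / 2) ^ K * exp (c / 2 * x)) * exp (- c * x)"
      using C pK by (intro mult_right_mono mult_left_mono) auto
    also have "\<dots> = C' * exp (- (c / 2) * x)"
      by (simp add: C'_def mult_exp_exp algebra_simps)
    finally show "norm (poly p (of_real x)) * (exp (- c * x) * x powr a) \<le> C' * exp (- (c / 2) * x)" .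
  qed
qed

lemma has_real_derivative_inverse_sqrt:
  "r < x \<Longrightarrow> ((\<lambda>s. inverse (sqrt (s - r))) has_real_derivative inverse (sqrt (x - r)) / (2 * (r - x))) (at x)"
  by (rule derivative_eq_intros refl | simp)+ (simp add: field_simps flip: power2_eq_square)

lemma set_integrable_inverse_sqrt_left: "set_integrable lborel {r - 1<..<r} (\<lambda>x. 1 / sqrt (r - x))"
proof -
  have "set_integrable lborel (einterval (ereal (r - 1)) (ereal r)) (\<lambda>x. 1 / sqrt (r - x))"
  proof (rule interval_integral_FTC_nonneg(1)[where F="\<lambda>x. - 2 * sqrt (r - x)" and A="-2" and B=0])
    fix x assume "ereal (r - 1) < ereal x" "ereal x < ereal r"
    then show "((\<lambda>x. - 2 * sqrt (r - x)) has_real_derivative 1 / sqrt (r - x)) (at x)"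
      and "isCont (\<lambda>x. 1 / sqrt (r - x)) x"
      by (auto intro!: derivative_eq_intros continuous_intros simp: field_simps)
  next
    have "((\<lambda>x. - 2 * sqrt (r - x)) \<longlongrightarrow> - 2 * sqrt (r - (r - 1))) (at_right (r - 1))"
      and "((\<lambda>x. - 2 * sqrt (r - x)) \<longlongrightarrow> - 2 * sqrt (r - r)) (at_left r)"
      by (intro tendsto_intros)+
    then show "(((\<lambda>x. - 2 * sqrt (r - x)) \<circ> real_of_ereal) \<longlongrightarrow> -2) (at_right (ereal (r - 1)))"
      and "(((\<lambda>x. - 2 * sqrt (r - x)) \<circ> real_of_ereal) \<longlongrightarrow> 0) (at_left (ereal r))"
      by (simp_all add: ereal_tendsto_simps)
  qed auto
  then show ?thesis by simp
qed

lemma set_integrable_inverse_sqrt_right: "set_integrable lborel {r<..<r + 1} (\<lambda>x. 1 / sqrt (x - r))"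
proof -
  have "set_integrable lborel (einterval (ereal r) (ereal (r + 1))) (\<lambda>x. 1 / sqrt (x - r))"
  proof (rule interval_integral_FTC_nonneg(1)[where F="\<lambda>x. 2 * sqrt (x - r)" and A=0 and B=2])
    fix x assume "ereal r < ereal x" "ereal x < ereal (r + 1)"
    then show "((\<lambda>x. 2 * sqrt (x - r)) has_real_derivative 1 / sqrt (x - r)) (at x)"
      and "isCont (\<lambda>x. 1 / sqrt (x - r)) x"
      by (auto intro!: derivative_eq_intros continuous_intros simp: field_simps)
  next
    have "((\<lambda>x. 2 * sqrt (x - r)) \<longlongrightarrow> 2 * sqrt (r - r)) (at_right r)"
      and "((\<lambda>x. 2 * sqrt (x - r)) \<longlongrightarrow> 2 * sqrt (r + 1 - r)) (at_left (r + 1))"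
      by (intro tendsto_intros)+
    then show "(((\<lambda>x. 2 * sqrt (x - r)) \<circ> real_of_ereal) \<longlongrightarrow> 0) (at_right (ereal r))"
      and "(((\<lambda>x. 2 * sqrt (x - r)) \<circ> real_of_ereal) \<longlongrightarrow> 2) (at_left (ereal (r + 1)))"
      by (simp_all add: ereal_tendsto_simps)
  qed auto
  then show ?thesis by simp
qed

lemma set_integrable_exp_neg: "(c::real) > 0 \<Longrightarrow> set_integrable lborel {0<..} (\<lambda>x. exp (- c * x))"
proof -
  assume c: "c > 0"
  have "set_integrable lborel (einterval (ereal 0) \<infinity>) (\<lambda>x. exp (- c * x))"
  proof (rule interval_integral_FTC_nonneg(1)[where F="\<lambda>x. - exp (- c * x) / c" and A="- 1 / c" and B=0])
    fix x
    show "((\<lambda>x. - exp (- c * x) / c) has_real_derivative exp (- c * x)) (at x)"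
      using c by (auto intro!: derivative_eq_intros simp: field_simps)
  next
    have "((\<lambda>x. - exp (- c * x) / c) \<longlongrightarrow> - exp (- c * 0) / c) (at_right 0)"
      using c by (intro tendsto_intros) auto
    then show "(((\<lambda>x. - exp (- c * x) / c) \<circ> real_of_ereal) \<longlongrightarrow> - 1 / c) (at_right (ereal 0))"
      by (simp add: ereal_tendsto_simps)
    have "((\<lambda>x. - exp (- c * x) / c) \<longlongrightarrow> 0) at_top"
      using c by real_asymp
    then show "(((\<lambda>x. - exp (- c * x) / c) \<circ> real_of_ereal) \<longlongrightarrow> 0) (at_left \<infinity>)"
      by (simp add: ereal_tendsto_simps)
  qed (auto intro!: continuous_intros)
  then show ?thesis by simp
qed

lemma set_integrable_exp_neg_div_sqrt_dist:
  assumes "c > 0"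
  shows "set_integrable lborel {0<..} (\<lambda>x. exp (- c * x) / sqrt \<bar>x - r\<bar>)"
proof -
  define G where "G = (\<lambda>x. indicator {r - 1<..<r} x * (1 / sqrt (r - x))
      + indicator {r<..<r + 1} x * (1 / sqrt (x - r)) + exp (- c * x))"
  have "set_integrable lborel {0<..} (\<lambda>x. indicator {r - 1<..<r} x * (1 / sqrt (r - x)))"
    using set_integrable_inverse_sqrt_left[of r]
    unfolding set_integrable_def by (intro integrable_mult_indicator) auto
  moreover have "set_integrable lborel {0<..} (\<lambda>x. indicator {r<..<r + 1} x * (1 / sqrt (x - r)))"
    using set_integrable_inverse_sqrt_right[of r]
    unfolding set_integrable_def by (intro integrable_mult_indicator) auto
  ultimately have "set_integrable lborel {0<..} G"
    unfolding G_def using set_integrable_exp_neg[OF assms] by (intro set_integral_add(1))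
  then show ?thesis
  proof (rule set_integrable_bound)
    show "AE x in lborel. x \<in> {0<..} \<longrightarrow> norm (exp (- c * x) / sqrt \<bar>x - r\<bar>) \<le> norm (G x)"
      using AE_lborel_singleton[of r]
    proof eventually_elim
      case (elim x)
      show ?case
      proof
        assume "x \<in> {0<..}"
        then have e: "0 < exp (- c * x)" "exp (- c * x) \<le> 1" using assms by simp_all
        have G: "0 \<le> indicator {r - 1<..<r} x * (1 / sqrt (r - x))" "0 \<le> indicator {r<..<r + 1} x * (1 / sqrt (x - r))"
          by (simp_all add: indicator_def)
        have "exp (- c * x) / sqrt \<bar>x - r\<bar> \<le> G x"
        proof (cases "\<bar>x - r\<bar> < 1")
          case True
          have "exp (- c * x) / sqrt \<bar>x - r\<bar> \<le> 1 / sqrt \<bar>x - r\<bar>"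
            using e by (intro divide_right_mono) auto
          also have "\<dots> \<le> G x"
            using True elim e by (cases "x < r") (auto simp: G_def indicator_def)
          finally show ?thesis .
        next
          case False
          then have "exp (- c * x) / sqrt \<bar>x - r\<bar> \<le> exp (- c * x)"
            using e by (simp add: divide_le_eq)
          also have "\<dots> \<le> G x" using G by (simp add: G_def)
          finally show ?thesis .
        qed
        then show "norm (exp (- c * x) / sqrt \<bar>x - r\<bar>) \<le> norm (G x)" by simp
      qed
    qed
  qed (unfold set_borel_measurable_def, measurable)
qed

lemma exp_neg_mult_sqrt_tendsto_0: "(c::real) > 0 \<Longrightarrow> ((\<lambda>s. C * exp (- c * s) * s * sqrt (a + s)) \<longlongrightarrow> 0) at_top"
  by real_asymp

lemma interval_integral_FTC_except:
  fixes F f :: "real \<Rightarrow> complex" and a b :: ereal and c :: real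
  assumes ab: "a < b"
    and deriv: "\<And>x. a < ereal x \<Longrightarrow> ereal x < b \<Longrightarrow> x \<noteq> c \<Longrightarrow> (F has_vector_derivative f x) (at x)"
    and cont: "\<And>x. a < ereal x \<Longrightarrow> ereal x < b \<Longrightarrow> x \<noteq> c \<Longrightarrow> isCont f x"
    and Fc: "a < ereal c \<Longrightarrow> ereal c < b \<Longrightarrow> isCont F c"
    and int: "set_integrable lborel (einterval a b) f"
    and A: "((F \<circ> real_of_ereal) \<longlongrightarrow> A) (at_right a)"
    and B: "((F \<circ> real_of_ereal) \<longlongrightarrow> B) (at_left b)"
  shows "(LBINT x=a..b. f x) = B - A"
proof (cases "a < ereal c \<and> ereal c < b")
  case False
  then show ?thesis
    using deriv cont by (intro interval_integral_FTC_integrable[OF ab _ _ int A B]) auto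
next
  case True
  then have "(F \<longlongrightarrow> F c) (at_left c)" "(F \<longlongrightarrow> F c) (at_right c)"
    using Fc filterlim_at_split by (auto simp: isCont_def)
  then have Fc': "((F \<circ> real_of_ereal) \<longlongrightarrow> F c) (at_left (ereal c))"
    "((F \<circ> real_of_ereal) \<longlongrightarrow> F c) (at_right (ereal c))"
    by (simp_all add: ereal_tendsto_simps)
  have sub: "einterval a (ereal c) \<subseteq> einterval a b" "einterval (ereal c) b \<subseteq> einterval a b"
    using True by (auto simp: einterval_def intro: less_trans[of _ "ereal c"])
  have left: "(F has_vector_derivative f x) (at x)" "isCont f x" if "a < ereal x" "x < c" for x
    using that True deriv cont less_trans[of "ereal x" "ereal c" b] by auto
  have right: "(F has_vector_derivative f x) (at x)" "isCont f x" if "c < x" "ereal x < b" for x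
    using that True deriv cont less_trans[of a "ereal c" "ereal x"] by auto
  have "(LBINT x=a..ereal c. f x) = F c - A"
    using True left
    by (intro interval_integral_FTC_integrable[OF _ _ _ set_integrable_subset[OF int _ sub(1)] A Fc'(1)]) auto
  moreover have "(LBINT x=ereal c..b. f x) = B - F c"
    using True right
    by (intro interval_integral_FTC_integrable[OF _ _ _ set_integrable_subset[OF int _ sub(2)] Fc'(2) B]) auto
  moreover have "(LBINT x=a..ereal c. f x) + (LBINT x=ereal c..b. f x) = (LBINT x=a..b. f x)"
  proof (rule interval_integral_sum)
    have "min a (min (ereal c) b) = a" "max a (max (ereal c) b) = b" using True by auto
    then show "interval_lebesgue_integrable lborel (min a (min (ereal c) b)) (max a (max (ereal c) b)) f"
      using int ab by (simp add: interval_lebesgue_integrable_def less_imp_le)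
  qed
  ultimately show ?thesis by simp
qed

lemma set_integral_sgn_split:
  fixes f :: "real \<Rightarrow> complex"
  assumes f: "set_integrable lborel {0<..} f" and y: "y > 0"
  shows "(LINT x:{0<..}|lborel. complex_of_real (sgn (x - y) / 2) * f x)
      = (LINT x:{0<..<y}|lborel. complex_of_real (-1/2) * f x) + (LINT x:{y<..}|lborel. complex_of_real (1/2) * f x)"
proof -
  have "set_integrable lborel {0<..<y} (\<lambda>x. complex_of_real (-1/2) * f x)"
    "set_integrable lborel {y<..} (\<lambda>x. complex_of_real (1/2) * f x)"
    by (intro set_integrable_mult_right set_integrable_subset[OF f]; use y in auto)+
  moreover have "(\<lambda>x. indicator {0<..} x *\<^sub>R (complex_of_real (sgn (x - y) / 2) * f x))
    = (\<lambda>x. indicator {0<..<y} x *\<^sub>R (complex_of_real (-1/2) * f x)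
        + indicator {y<..} x *\<^sub>R (complex_of_real (1/2) * f x))"
    using y by (auto simp: indicator_def sgn_if fun_eq_iff)
  ultimately show ?thesis
    unfolding set_lebesgue_integral_def set_integrable_def by (simp add: Bochner_Integration.integral_add)
qed

section \<open>The branch and the weight\<close>

lemma norm_br:
  assumes "z \<noteq> 0"
  shows "norm (br \<sigma> z) = 1 / sqrt (norm z)"
proof (cases "Im z = 0 \<and> Re z < 0")
  case True
  then have "norm z = - Re z" by (simp add: cmod_def)
  then show ?thesis using True by (simp add: br_def norm_divide)
next
  case False
  have "(-1/2 :: complex) \<in> \<real>"
    by (metis Reals_of_real of_real_divide of_real_minus of_real_1 of_real_numeral)
  then have "norm (z powr (-1/2)) = norm z powr (-1/2)"
    using norm_powr_real_powr' by simp
  also have "\<dots> = 1 / sqrt (norm z)"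
    using assms by (simp add: powr_minus_divide powr_half_sqrt)
  moreover have "br \<sigma> z = z powr (-1/2)" unfolding br_def by (rule if_not_P[OF False])
  ultimately show ?thesis by simp
qed

lemma norm_mult_br: "norm (z * br \<sigma> z) = sqrt (norm z)"
proof (cases "z = 0")
  case False
  then show ?thesis by (simp add: norm_mult norm_br real_div_sqrt)
qed (simp add: br_def)

lemma mult_br_square:
  assumes "z \<noteq> 0"
  shows "z * (br \<sigma> z)^2 = 1"
proof (cases "Im z = 0 \<and> Re z < 0")
  case True
  then have z: "z = of_real (Re z)" by (simp add: complex_eq_iff)
  have "(complex_of_real (sqrt (- Re z)))^2 = of_real (- Re z)"
    using True by (simp flip: of_real_power)
  then have "(br \<sigma> z)^2 = -1 / of_real (- Re z)"
    using True by (simp add: br_def power_divide)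
  then show ?thesis using True by (subst z) (simp add: field_simps)
next
  case False
  have "(z powr (-1/2))^2 = z powr (of_nat 2 * (-1/2))"
    using assms by (rule powr_power)
  also have "\<dots> = inverse z" by (simp add: powr_minus)
  moreover have "br \<sigma> z = z powr (-1/2)" unfolding br_def by (rule if_not_P[OF False])
  ultimately show ?thesis using assms by (simp add: field_simps)
qed

lemma br_has_vector_derivative_on_cut:
  assumes "Im t = 0" "Re t < x"
  shows "((\<lambda>s. br \<sigma> (t - complex_of_real s)) has_vector_derivative
            (br \<sigma> (t - complex_of_real x) / (2 * (t - complex_of_real x)))) (at x)"
proof -
  define r where "r = Re t"
  define c :: complex where "c = (if \<sigma> then \<i> else - \<i>)"
  have t: "t = of_real r" using assms by (simp add: r_def complex_eq_iff)
  have xr: "0 < x - r" using assms by (simp add: r_def)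
  have eq: "br \<sigma> (t - complex_of_real s) = c * of_real (inverse (sqrt (s - r)))" if "r < s" for s
    using that by (simp add: br_def t c_def divide_inverse)
  have "((\<lambda>s. c * of_real (inverse (sqrt (s - r)))) has_vector_derivative
      c * of_real (inverse (sqrt (x - r)) / (2 * (r - x)))) (at x)"
    using has_real_derivative_inverse_sqrt[of r x] xr
    by (intro has_vector_derivative_mult_right has_vector_derivative_of_real) simp
  then have D: "((\<lambda>s. br \<sigma> (t - complex_of_real s)) has_vector_derivative
      c * of_real (inverse (sqrt (x - r)) / (2 * (r - x)))) (at x)"
    by (rule has_vector_derivative_transform_within_open[where S="{r<..}"]) (use xr eq in auto)
  have "c * of_real (inverse (sqrt (x - r)) / (2 * (r - x)))
      = c * of_real (inverse (sqrt (x - r))) / (2 * (t - complex_of_real x))"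
    by (simp add: t)
  also have "\<dots> = br \<sigma> (t - complex_of_real x) / (2 * (t - complex_of_real x))"
    using eq[of x] xr by simp
  finally show ?thesis using D by simp
qed

lemma br_has_vector_derivative_off_cut:
  assumes "t - complex_of_real x \<notin> \<real>\<^sub>\<le>\<^sub>0"
  shows "((\<lambda>s. br \<sigma> (t - complex_of_real s)) has_vector_derivative
            (br \<sigma> (t - complex_of_real x) / (2 * (t - complex_of_real x)))) (at x)"
proof -
  define S where "S = (\<lambda>s. t - complex_of_real s) -` (- \<real>\<^sub>\<le>\<^sub>0)"
  have "open S" unfolding S_def by (intro open_vimage) (auto intro!: continuous_intros)
  have eq: "br \<sigma> (t - complex_of_real s) = (t - complex_of_real s) powr (-1/2)" if "s \<in> S" for s
    using that by (auto simp: br_def S_def complex_nonpos_Reals_iff)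
  have "((\<lambda>z. (t - z) powr (-1/2)) has_field_derivative
          (-1/2) * (t - complex_of_real x) powr (-1/2 - 1) * (-1)) (at (complex_of_real x))"
  proof -
    have "((\<lambda>z. t - z) has_field_derivative (-1)) (at (complex_of_real x))"
      by (auto intro!: derivative_eq_intros)
    from DERIV_chain2[where f="\<lambda>z. z powr (-1/2)", OF has_field_derivative_powr[OF assms] this]
    show ?thesis by simp
  qed
  then have "((\<lambda>s. (t - complex_of_real s) powr (-1/2)) has_vector_derivative
          (-1/2) * (t - complex_of_real x) powr (-1/2 - 1) * (-1)) (at x)"
    by (rule has_vector_derivative_real_field)
  then have D: "((\<lambda>s. br \<sigma> (t - complex_of_real s)) has_vector_derivative
          (-1/2) * (t - complex_of_real x) powr (-1/2 - 1) * (-1)) (at x)"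
    by (rule has_vector_derivative_transform_within_open[OF _ \<open>open S\<close>])
       (use assms eq in \<open>auto simp: S_def\<close>)
  have "t - complex_of_real x \<noteq> 0" using assms by auto
  moreover have "(t - complex_of_real x) powr (-1/2 - 1) = (t - complex_of_real x) powr (-1/2) / (t - complex_of_real x)"
    by (simp only: powr_diff powr_to_1)
  moreover have "\<And>w P Q :: complex. w \<noteq> 0 \<Longrightarrow> P = Q / w \<Longrightarrow> (-1/2) * P * (-1) = Q / (2 * w)"
    by (simp add: field_simps)
  ultimately have "(-1/2) * (t - complex_of_real x) powr (-1/2 - 1) * (-1) =
      (t - complex_of_real x) powr (-1/2) / (2 * (t - complex_of_real x))"
    by blast
  also have "\<dots> = br \<sigma> (t - complex_of_real x) / (2 * (t - complex_of_real x))"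
    using assms eq[of x] by (simp add: S_def)
  finally show ?thesis using D by simp
qed

lemma br_has_vector_derivative:
  assumes "t - complex_of_real x \<noteq> 0"
  shows "((\<lambda>s. br \<sigma> (t - complex_of_real s)) has_vector_derivative
            (br \<sigma> (t - complex_of_real x) / (2 * (t - complex_of_real x)))) (at x)"
proof (cases "Im t = 0 \<and> Re t < x")
  case True
  then show ?thesis by (intro br_has_vector_derivative_on_cut) auto
next
  case False
  then have "t - complex_of_real x \<notin> \<real>\<^sub>\<le>\<^sub>0"
    using assms by (auto simp: complex_nonpos_Reals_iff complex_eq_iff)
  then show ?thesis by (rule br_has_vector_derivative_off_cut)
qed

definition wgt_expo :: "nat \<Rightarrow> nat \<Rightarrow> real" where
  "wgt_expo M N = (real M - real N - 1) / 2"

lemma wgt_eq: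
  "wgt M N t \<sigma> x = complex_of_real (exp (- real M * x / 2) * x powr wgt_expo M N) * br \<sigma> (t - complex_of_real x)"
  by (simp add: wgt_def wgt_expo_def)

lemma wgt_has_vector_derivative:
  assumes "x > 0" "t - complex_of_real x \<noteq> 0"
  shows "(wgt M N t \<sigma> has_vector_derivative
      wgt M N t \<sigma> x * (- of_nat M / 2 + of_real (wgt_expo M N) / of_real x + 1 / (2 * (t - of_real x)))) (at x)"
proof -
  define a where "a = wgt_expo M N"
  have "((\<lambda>s. exp (- real M * s / 2) * s powr a) has_real_derivative
           exp (- real M * x / 2) * (- real M / 2) * x powr a + exp (- real M * x / 2) * (a * x powr (a - 1))) (at x)"
    using assms by (auto intro!: derivative_eq_intros simp: field_simps)
  moreover have "x powr (a - 1) = x powr a / x" using assms by (simp add: powr_diff)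
  ultimately have "((\<lambda>s. exp (- real M * s / 2) * s powr a) has_real_derivative
           exp (- real M * x / 2) * x powr a * (- real M / 2 + a / x)) (at x)"
    using assms by (simp add: field_simps)
  then have D: "(wgt M N t \<sigma> has_vector_derivative
      complex_of_real (exp (- real M * x / 2) * x powr a) * (br \<sigma> (t - complex_of_real x) / (2 * (t - complex_of_real x)))
      + complex_of_real (exp (- real M * x / 2) * x powr a * (- real M / 2 + a / x)) * br \<sigma> (t - complex_of_real x)) (at x)"
    unfolding wgt_eq[abs_def] a_def
    by (intro has_vector_derivative_mult has_vector_derivative_of_real br_has_vector_derivative assms)
  have "complex_of_real (exp (- real M * x / 2) * x powr a) * (br \<sigma> (t - complex_of_real x) / (2 * (t - complex_of_real x)))
      + complex_of_real (exp (- real M * x / 2) * x powr a * (- real M / 2 + a / x)) * br \<sigma> (t - complex_of_real x)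
      = wgt M N t \<sigma> x * (- of_nat M / 2 + of_real (wgt_expo M N) / of_real x + 1 / (2 * (t - of_real x)))"
    using assms by (simp add: wgt_eq a_def field_simps)
  then show ?thesis using D by simp
qed

lemma wgt_nonzero:
  assumes "x > 0" "t - complex_of_real x \<noteq> 0"
  shows "wgt M N t \<sigma> x \<noteq> 0"
  using assms norm_br[OF assms(2), of \<sigma>] by (auto simp: wgt_def)

text \<open>This identity turns the skew product of \<open>D q\<close> into a \<open>w\<^sub>0\<close>-inner product.\<close>
lemma wgt_square:
  assumes "N < M" "x > 0" "t - complex_of_real x \<noteq> 0"
  shows "complex_of_real x * (t - complex_of_real x) * (wgt M N t \<sigma> x)^2 = complex_of_real (w0 M N x)"
proof -
  define E where "E = exp (- real M * x / 2) * x powr wgt_expo M N"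
  have "(x powr wgt_expo M N) ^ 2 = x powr (of_nat 2 * wgt_expo M N)"
    using assms by (intro powr_power) simp
  also have "of_nat 2 * wgt_expo M N = real (M - N - 1)"
    using assms by (simp add: wgt_expo_def of_nat_diff)
  also have "x powr real (M - N - 1) = x ^ (M - N - 1)"
    using assms by (intro powr_realpow)
  finally have "(x powr wgt_expo M N) ^ 2 = x ^ (M - N - 1)" .
  moreover have "exp (- real M * x / 2) ^ 2 = exp (- real M * x)"
    by (simp add: power2_eq_square flip: exp_add)
  moreover have "x * x ^ (M - N - 1) = x ^ (M - N)"
    using assms by (cases "M - N") simp_all
  ultimately have "complex_of_real x * complex_of_real (E ^ 2) = complex_of_real (w0 M N x)"
    by (simp add: E_def w0_def power_mult_distrib flip: of_real_mult)
  moreover have "(t - complex_of_real x) * (br \<sigma> (t - complex_of_real x))^2 = 1"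
    using assms(3) by (rule mult_br_square)
  ultimately show ?thesis
    unfolding wgt_eq E_def[symmetric] by (simp add: power_mult_distrib mult_ac)
qed

lemma borel_measurable_br: "(\<lambda>x. br \<sigma> (t - complex_of_real x)) \<in> borel_measurable borel"
proof (rule borel_measurable_continuous_countable_exceptions[where X="{Re t}"])
  show "continuous_on (- {Re t}) (\<lambda>x. br \<sigma> (t - complex_of_real x))"
  proof (intro continuous_at_imp_continuous_on ballI)
    fix x assume "x \<in> - {Re t}"
    then have "t - complex_of_real x \<noteq> 0" by (auto simp: complex_eq_iff)
    from br_has_vector_derivative[OF this] show "isCont (\<lambda>x. br \<sigma> (t - complex_of_real x)) x"
      using has_vector_derivative_continuous by blast
  qed
qed simp

lemma borel_measurable_wgt [measurable]: "wgt M N t \<sigma> \<in> borel_measurable borel"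
  unfolding wgt_def[abs_def] using borel_measurable_br by measurable

lemma borel_measurable_poly_of_real [measurable]:
  "(\<lambda>x. poly p (complex_of_real x)) \<in> borel_measurable borel"
  by (intro borel_measurable_continuous_onI continuous_intros)

lemma poly_wgt_integrable:
  assumes "N < M"
  shows "set_integrable lborel {0<..} (\<lambda>x. poly p (complex_of_real x) * wgt M N t \<sigma> x)"
proof -
  have M: "real M / 2 > 0" "wgt_expo M N \<ge> 0" using assms by (simp_all add: wgt_expo_def)
  obtain C where C: "C \<ge> 0" "\<forall>x>0. norm (poly p (complex_of_real x)) * (exp (- (real M / 2) * x) * x powr wgt_expo M N)
      \<le> C * exp (- (real M / 2 / 2) * x)"
    using poly_exp_decay_bound[OF M] by blast
  have "set_integrable lborel {0<..} (\<lambda>x. C * (exp (- (real M / 4) * x) / sqrt \<bar>x - Re t\<bar>))"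
    using M by (intro set_integrable_mult_right set_integrable_exp_neg_div_sqrt_dist) simp
  then show ?thesis
  proof (rule set_integrable_bound)
    show "AE x in lborel. x \<in> {0<..} \<longrightarrow> norm (poly p (complex_of_real x) * wgt M N t \<sigma> x)
        \<le> norm (C * (exp (- (real M / 4) * x) / sqrt \<bar>x - Re t\<bar>))"
      using AE_lborel_singleton[of "Re t"]
    proof eventually_elim
      case (elim x)
      show ?case
      proof
        assume "x \<in> {0<..}"
        then have x: "x > 0" by simp
        have tx: "t - complex_of_real x \<noteq> 0" and d: "0 < \<bar>x - Re t\<bar>" using elim by (auto simp: complex_eq_iff)
        have "\<bar>x - Re t\<bar> \<le> norm (t - complex_of_real x)"
          using abs_Re_le_cmod[of "t - complex_of_real x"] by simp
        moreover have "0 < sqrt (norm (t - complex_of_real x))" using tx by simp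
        ultimately have s: "1 / sqrt (norm (t - complex_of_real x)) \<le> 1 / sqrt \<bar>x - Re t\<bar>"
          using d by (intro divide_left_mono mult_pos_pos) auto
        have "norm (poly p (complex_of_real x) * wgt M N t \<sigma> x) =
            norm (poly p (complex_of_real x)) * (exp (- (real M / 2) * x) * x powr wgt_expo M N)
              * (1 / sqrt (norm (t - complex_of_real x)))"
          using x by (simp add: norm_mult wgt_eq norm_br[OF tx])
        also have "\<dots> \<le> C * exp (- (real M / 4) * x) * (1 / sqrt \<bar>x - Re t\<bar>)"
          by (rule mult_mono) (use C x s in simp_all)
        finally show "norm (poly p (complex_of_real x) * wgt M N t \<sigma> x)
            \<le> norm (C * (exp (- (real M / 4) * x) / sqrt \<bar>x - Re t\<bar>))"
          using C by simp
      qed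
    qed
  qed (unfold set_borel_measurable_def, measurable)
qed

lemma poly_wgt_continuous:
  assumes "x > 0" "t - complex_of_real x \<noteq> 0"
  shows "isCont (\<lambda>x. poly p (complex_of_real x) * wgt M N t \<sigma> x) x"
  using has_vector_derivative_continuous[OF wgt_has_vector_derivative[OF assms]]
  by (intro continuous_intros) auto

section \<open>The operator \<open>D\<close> and the map \<open>f\<close>\<close>

text \<open>The polynomial \<open>x (t - x) w'(x) / w(x)\<close>.\<close>
definition wgt_logderiv_poly :: "nat \<Rightarrow> nat \<Rightarrow> complex \<Rightarrow> complex poly" where
  "wgt_logderiv_poly M N t =
     [:of_real (wgt_expo M N) * t, 1/2 - of_real (wgt_expo M N) - of_nat M * t / 2, of_nat M / 2:]"

text \<open>\<open>[:0, t, -1:]\<close> is \<open>x (t - x)\<close>, so \<open>(q x (t - x) w)' = (Dpoly M N t q) w\<close>.\<close>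
definition Dpoly :: "nat \<Rightarrow> nat \<Rightarrow> complex \<Rightarrow> complex poly \<Rightarrow> complex poly" where
  "Dpoly M N t = diff_op [:0, t, -1:] (wgt_logderiv_poly M N t)"

definition Dop_primitive :: "nat \<Rightarrow> nat \<Rightarrow> complex \<Rightarrow> bool \<Rightarrow> complex poly \<Rightarrow> real \<Rightarrow> complex" where
  "Dop_primitive M N t \<sigma> q s = poly q (of_real s) * of_real s * (t - of_real s) * wgt M N t \<sigma> s"

lemma Dop_primitive_has_vector_derivative:
  assumes "x > 0" "t - complex_of_real x \<noteq> 0"
  shows "(Dop_primitive M N t \<sigma> q has_vector_derivative
           poly (Dpoly M N t q) (complex_of_real x) * wgt M N t \<sigma> x) (at x)"
proof -
  define a where "a = complex_of_real (wgt_expo M N)"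
  define L where "L = - of_nat M / 2 + a / of_real x + 1 / (2 * (t - of_real x))"
  define Q where "Q = q * [:0, t, -1:]"
  define B where "B = wgt_logderiv_poly M N t"
  have poly_Q: "poly Q z = poly q z * z * (t - z)" for z
    by (simp add: Q_def algebra_simps)
  have D: "((\<lambda>s. poly Q (complex_of_real s) * wgt M N t \<sigma> s) has_vector_derivative
       poly Q (complex_of_real x) * (wgt M N t \<sigma> x * L) + poly (pderiv Q) (complex_of_real x) * wgt M N t \<sigma> x) (at x)"
    unfolding a_def L_def
    by (intro has_vector_derivative_mult wgt_has_vector_derivative assms
        has_vector_derivative_real_field poly_DERIV)
  have B: "B = [:a * t, 1/2 - a - of_nat M * t / 2, of_nat M / 2:]"
    by (simp add: B_def a_def wgt_logderiv_poly_def)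
  have "poly Q (complex_of_real x) * L = poly (q * B) (complex_of_real x)"
    using assms by (simp add: poly_Q L_def B field_simps)
  then have "poly Q (complex_of_real x) * (wgt M N t \<sigma> x * L) + poly (pderiv Q) (complex_of_real x) * wgt M N t \<sigma> x
      = poly (pderiv Q + q * B) (complex_of_real x) * wgt M N t \<sigma> x"
    by (simp add: algebra_simps)
  also have "pderiv Q + q * B = Dpoly M N t q"
    by (simp add: Dpoly_def diff_op_def Q_def B_def)
  finally show ?thesis using D by (simp add: Dop_primitive_def[abs_def] poly_Q)
qed

lemma Dop_eq_Dpoly: "Dop M N t \<sigma> q = Dpoly M N t q"
  unfolding Dop_def Dop_primitive_def[symmetric]
proof (rule the_equality)
  show "\<forall>x. x > 0 \<and> complex_of_real x \<noteq> t \<longrightarrow>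
      (Dop_primitive M N t \<sigma> q has_vector_derivative poly (Dpoly M N t q) (complex_of_real x) * wgt M N t \<sigma> x) (at x)"
    using Dop_primitive_has_vector_derivative by auto
next
  fix P
  assume P: "\<forall>x. x > 0 \<and> complex_of_real x \<noteq> t \<longrightarrow>
      (Dop_primitive M N t \<sigma> q has_vector_derivative poly P (complex_of_real x) * wgt M N t \<sigma> x) (at x)"
  show "P = Dpoly M N t q"
  proof (rule poly_eqI_infinite)
    have "infinite ({0<..} - {Re t})" using infinite_Ioi[of 0] by simp
    moreover have "inj_on complex_of_real ({0<..} - {Re t})" by (auto intro: inj_onI)
    ultimately show "infinite (complex_of_real ` ({0<..} - {Re t}))" by (simp add: finite_image_iff)
  next
    fix z assume "z \<in> complex_of_real ` ({0<..} - {Re t})"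
    then obtain x where z: "z = complex_of_real x" and "x > 0" "x \<noteq> Re t" by auto
    then have x: "x > 0" "t - complex_of_real x \<noteq> 0" by (auto simp: complex_eq_iff)
    have "poly P z * wgt M N t \<sigma> x = poly (Dpoly M N t q) z * wgt M N t \<sigma> x"
      using P x Dop_primitive_has_vector_derivative[OF x] unfolding z
      by (intro vector_derivative_unique_at) auto
    then show "poly P z = poly (Dpoly M N t q) z" using wgt_nonzero[OF x] by simp
  qed
qed

lemma degree_wgt_logderiv_poly: "M > 0 \<Longrightarrow> degree (wgt_logderiv_poly M N t) = 2"
  by (simp add: wgt_logderiv_poly_def)

lemma Dop_decomposition:
  assumes "M > 0"
  shows "\<exists>q R. degree R \<le> 1 \<and> P = Dop M N t \<sigma> q + R"
  unfolding Dop_eq_Dpoly Dpoly_def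
  by (rule diff_op_decomposition[OF _ degree_wgt_logderiv_poly[OF assms]]) simp

lemma Dop_decomposition_unique:
  assumes "M > 0" "degree R1 \<le> 1" "degree R2 \<le> 1" "Dop M N t \<sigma> q1 + R1 = Dop M N t \<sigma> q2 + R2"
  shows "q1 = q2" "R1 = R2"
proof -
  have "degree [:0, t, -1:] \<le> 2" by simp
  from diff_op_decomposition_unique[OF this degree_wgt_logderiv_poly[OF assms(1)] assms(2,3)]
  show "q1 = q2" "R1 = R2" using assms(4) unfolding Dop_eq_Dpoly Dpoly_def by blast+
qed

lemma Dop_lincomb: "Dop M N t \<sigma> (smult a q1 + smult b q2) = smult a (Dop M N t \<sigma> q1) + smult b (Dop M N t \<sigma> q2)"
  by (simp add: Dop_eq_Dpoly Dpoly_def diff_op_add diff_op_smult)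

lemma ex1_Dop_decomposition:
  assumes "M > 0"
  shows "\<exists>!(q, R). degree R \<le> 1 \<and> P = Dop M N t \<sigma> q + R"
proof -
  obtain q R where qR: "degree R \<le> 1" "P = Dop M N t \<sigma> q + R"
    using Dop_decomposition[OF assms] by blast
  show ?thesis
  proof (rule ex1I[of _ "(q, R)"])
    fix z assume z: "case z of (q', R') \<Rightarrow> degree R' \<le> 1 \<and> P = Dop M N t \<sigma> q' + R'"
    obtain q' R' where "z = (q', R')" by (cases z)
    moreover have "degree R' \<le> 1" "Dop M N t \<sigma> q' + R' = Dop M N t \<sigma> q + R"
      using z qR(2) by (simp_all add: \<open>z = (q', R')\<close>)
    ultimately show "z = (q, R)"
      using Dop_decomposition_unique[OF assms _ qR(1)] by blast
  qed (use qR in simp)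
qed

lemma fmap_eqI:
  assumes "M > 0" "degree R \<le> 1" "P = Dop M N t \<sigma> q + R"
  shows "fmap M N t \<sigma> P = R"
  unfolding fmap_def
proof (rule the_equality)
  fix R' assume "degree R' \<le> 1 \<and> (\<exists>q'. P = Dop M N t \<sigma> q' + R')"
  then obtain q' where "degree R' \<le> 1" "Dop M N t \<sigma> q' + R' = Dop M N t \<sigma> q + R"
    using assms(3) by auto
  then show "R' = R" using Dop_decomposition_unique(2)[OF assms(1) _ assms(2)] by blast
qed (use assms in blast)

lemma degree_fmap:
  assumes "M > 0"
  shows "degree (fmap M N t \<sigma> P) \<le> 1"
proof -
  obtain q R where "degree R \<le> 1" "P = Dop M N t \<sigma> q + R" using Dop_decomposition[OF assms] by blast
  then show ?thesis using fmap_eqI[OF assms] by simp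
qed

lemma fmap_lincomb:
  assumes "M > 0"
  shows "fmap M N t \<sigma> (smult a P1 + smult b P2) = smult a (fmap M N t \<sigma> P1) + smult b (fmap M N t \<sigma> P2)"
proof -
  obtain q1 R1 where 1: "degree R1 \<le> 1" "P1 = Dop M N t \<sigma> q1 + R1" using Dop_decomposition[OF assms] by blast
  obtain q2 R2 where 2: "degree R2 \<le> 1" "P2 = Dop M N t \<sigma> q2 + R2" using Dop_decomposition[OF assms] by blast
  have "degree (smult a R1 + smult b R2) \<le> 1"
    using 1 2 by (intro degree_add_le order.trans[OF degree_smult_le]) auto
  moreover have "smult a P1 + smult b P2 = Dop M N t \<sigma> (smult a q1 + smult b q2) + (smult a R1 + smult b R2)"
    unfolding Dop_lincomb 1 2 by (simp add: smult_add_right add_ac)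
  ultimately have "fmap M N t \<sigma> (smult a P1 + smult b P2) = smult a R1 + smult b R2"
    by (rule fmap_eqI[OF assms])
  moreover have "fmap M N t \<sigma> P1 = R1" "fmap M N t \<sigma> P2 = R2"
    using fmap_eqI[OF assms 1] fmap_eqI[OF assms 2] by simp_all
  ultimately show ?thesis by simp
qed

lemma degree_Dop:
  assumes "M > 0" "q \<noteq> 0"
  shows "degree (Dop M N t \<sigma> q) = degree q + 2"
  unfolding Dop_eq_Dpoly Dpoly_def
  by (rule degree_diff_op(1)[OF _ degree_wgt_logderiv_poly[OF assms(1)] assms(2)]) simp

lemma Dop_primitive_continuous:
  assumes "x > 0"
  shows "isCont (Dop_primitive M N t \<sigma> q) x"
proof (cases "t - complex_of_real x = 0")
  case False
  then show ?thesis
    using Dop_primitive_has_vector_derivative[OF assms False] has_vector_derivative_continuous by blast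
next
  case True
  \<comment> \<open>at the branch point the factor \<open>(t - x) br (t - x)\<close> has modulus \<open>sqrt |t - x|\<close> and tends to 0\<close>
  define A where "A = (\<lambda>s. poly q (complex_of_real s) * complex_of_real s *
      complex_of_real (exp (- real M * s / 2) * s powr wgt_expo M N))"
  define K where "K = (\<lambda>s. (t - complex_of_real s) * br \<sigma> (t - complex_of_real s))"
  have u: "Dop_primitive M N t \<sigma> q = (\<lambda>s. A s * K s)"
    by (auto simp: Dop_primitive_def A_def K_def wgt_eq algebra_simps)
  have "isCont A x" unfolding A_def using assms by (intro continuous_intros) auto
  moreover have "((\<lambda>s. norm (K s)) \<longlongrightarrow> sqrt (norm (t - complex_of_real x))) (at x)"
    unfolding K_def norm_mult_br by (intro tendsto_intros)
  then have "(K \<longlongrightarrow> 0) (at x)" using True by (simp add: tendsto_norm_zero_iff)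
  ultimately have "((\<lambda>s. A s * K s) \<longlongrightarrow> 0) (at x)"
    using tendsto_mult[of A "A x" "at x" K 0] by (simp add: isCont_def)
  moreover have "K x = 0" using True by (simp add: K_def)
  ultimately show ?thesis unfolding u isCont_def by simp
qed

lemma Dop_primitive_bound:
  assumes "N < M"
  shows "\<exists>C\<ge>0. \<forall>s>0. norm (Dop_primitive M N t \<sigma> q s)
           \<le> C * exp (- (real M / 4) * s) * s * sqrt (norm t + s)"
proof -
  have M: "real M / 2 > 0" "wgt_expo M N \<ge> 0" using assms by (simp_all add: wgt_expo_def)
  obtain C where C: "C \<ge> 0" "\<forall>x>0. norm (poly q (complex_of_real x)) * (exp (- (real M / 2) * x) * x powr wgt_expo M N)
      \<le> C * exp (- (real M / 2 / 2) * x)"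
    using poly_exp_decay_bound[OF M] by blast
  show ?thesis
  proof (intro exI[of _ C] conjI allI impI)
    fix s :: real assume s: "s > 0"
    have "norm (t - complex_of_real s) \<le> norm t + s"
      using norm_triangle_ineq4[of t "complex_of_real s"] s by simp
    then have "sqrt (norm (t - complex_of_real s)) \<le> sqrt (norm t + s)" by simp
    moreover have "norm (Dop_primitive M N t \<sigma> q s) = norm (poly q (complex_of_real s))
        * (exp (- real M * s / 2) * s powr wgt_expo M N) * s * norm ((t - complex_of_real s) * br \<sigma> (t - complex_of_real s))"
      using s unfolding Dop_primitive_def wgt_eq by (simp add: norm_mult)
    moreover have "norm (poly q (complex_of_real s)) * (exp (- real M * s / 2) * s powr wgt_expo M N)
        \<le> C * exp (- (real M / 4) * s)"
      using C s by simp
    ultimately show "norm (Dop_primitive M N t \<sigma> q s) \<le> C * exp (- (real M / 4) * s) * s * sqrt (norm t + s)"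
      unfolding norm_mult_br using C s by (simp only:) (rule mult_mono[OF mult_right_mono]; simp)
  qed (use C in simp)
qed

lemma Dop_primitive_tendsto_0:
  assumes "N < M"
  shows "(Dop_primitive M N t \<sigma> q \<longlongrightarrow> 0) (at_right 0)" "(Dop_primitive M N t \<sigma> q \<longlongrightarrow> 0) at_top"
proof -
  obtain C where C: "\<forall>s>0. norm (Dop_primitive M N t \<sigma> q s) \<le> C * exp (- (real M / 4) * s) * s * sqrt (norm t + s)"
    using Dop_primitive_bound[OF assms] by blast
  have "((\<lambda>s. C * exp (- (real M / 4) * s) * s * sqrt (norm t + s)) \<longlongrightarrow> C * exp (- (real M / 4) * 0) * 0 * sqrt (norm t + 0)) (at_right 0)"
    by (intro tendsto_intros)
  moreover have "\<forall>\<^sub>F s in at_right 0. norm (Dop_primitive M N t \<sigma> q s) \<le> C * exp (- (real M / 4) * s) * s * sqrt (norm t + s)"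
    using eventually_at_right_less[of 0] by (rule eventually_mono) (rule C[rule_format])
  ultimately show "(Dop_primitive M N t \<sigma> q \<longlongrightarrow> 0) (at_right 0)"
    by (simp add: Lim_null_comparison)
  have "((\<lambda>s. C * exp (- (real M / 4) * s) * s * sqrt (norm t + s)) \<longlongrightarrow> 0) at_top"
    using assms by (intro exp_neg_mult_sqrt_tendsto_0) simp
  moreover have "\<forall>\<^sub>F s in at_top. norm (Dop_primitive M N t \<sigma> q s) \<le> C * exp (- (real M / 4) * s) * s * sqrt (norm t + s)"
    using eventually_gt_at_top[of 0] by (rule eventually_mono) (rule C[rule_format])
  ultimately show "(Dop_primitive M N t \<sigma> q \<longlongrightarrow> 0) at_top"
    by (rule Lim_null_comparison[rotated])
qed

section \<open>The skew product\<close>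

text \<open>Integration by parts in the inner integral of the skew product.\<close>
lemma integral_sgn_Dop_wgt:
  assumes "N < M" and y: "y > 0"
  shows "(LINT x:{0<..}|lborel. complex_of_real (sgn (x - y) / 2) *
            (poly (Dop M N t \<sigma> q) (complex_of_real x) * wgt M N t \<sigma> x)) = - Dop_primitive M N t \<sigma> q y"
proof -
  define f where "f = (\<lambda>x. poly (Dpoly M N t q) (complex_of_real x) * wgt M N t \<sigma> x)"
  define u where "u = Dop_primitive M N t \<sigma> q"
  have fint: "set_integrable lborel {0<..} f" unfolding f_def by (rule poly_wgt_integrable[OF assms(1)])
  have dv: "(u has_vector_derivative f x) (at x)" "isCont f x" if "x > 0" "x \<noteq> Re t" for x
  proof -
    have "t - complex_of_real x \<noteq> 0" using that by (auto simp: complex_eq_iff)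
    then show "(u has_vector_derivative f x) (at x)" "isCont f x"
      unfolding u_def f_def using that Dop_primitive_has_vector_derivative poly_wgt_continuous by blast+
  qed
  have uc: "isCont u x" if "x > 0" for x unfolding u_def using Dop_primitive_continuous that by blast
  then have uy: "(u \<longlongrightarrow> u y) (at_left y)" "(u \<longlongrightarrow> u y) (at_right y)"
    using y filterlim_at_split unfolding isCont_def by blast+
  have "(LBINT x=ereal 0..ereal y. f x) = u y - 0"
  proof (rule interval_integral_FTC_except[where c="Re t"])
    show "set_integrable lborel (einterval (ereal 0) (ereal y)) f"
      by (rule set_integrable_subset[OF fint]) auto
    show "((u \<circ> real_of_ereal) \<longlongrightarrow> 0) (at_right (ereal 0))"
      using Dop_primitive_tendsto_0(1)[OF assms(1)] unfolding u_def by (simp add: ereal_tendsto_simps)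
    show "((u \<circ> real_of_ereal) \<longlongrightarrow> u y) (at_left (ereal y))"
      using uy by (simp add: ereal_tendsto_simps)
  qed (use y in \<open>auto intro!: dv uc\<close>)
  then have L1: "(LINT x:{0<..<y}|lborel. f x) = u y"
    using y by (simp add: interval_integral_Ioo)
  have "(LBINT x=ereal y..\<infinity>. f x) = 0 - u y"
  proof (rule interval_integral_FTC_except[where c="Re t"])
    show "set_integrable lborel (einterval (ereal y) \<infinity>) f"
      by (rule set_integrable_subset[OF fint]) (use y in auto)
    show "((u \<circ> real_of_ereal) \<longlongrightarrow> u y) (at_right (ereal y))"
      using uy by (simp add: ereal_tendsto_simps)
    show "((u \<circ> real_of_ereal) \<longlongrightarrow> 0) (at_left \<infinity>)"
      using Dop_primitive_tendsto_0(2)[OF assms(1)] unfolding u_def by (simp add: ereal_tendsto_simps)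
  qed (use y in \<open>auto intro!: dv uc\<close>)
  then have L2: "(LINT x:{y<..}|lborel. f x) = - u y"
    by (simp add: interval_integral_Ioi)
  have "(LINT x:{0<..}|lborel. complex_of_real (sgn (x - y) / 2) * f x)
      = (LINT x:{0<..<y}|lborel. complex_of_real (-1/2) * f x) + (LINT x:{y<..}|lborel. complex_of_real (1/2) * f x)"
    by (rule set_integral_sgn_split[OF fint y])
  also have "\<dots> = - u y" by (simp only: set_integral_mult_right L1 L2) simp
  finally show ?thesis unfolding f_def u_def Dop_eq_Dpoly .
qed

definition wgt_poly :: "nat \<Rightarrow> nat \<Rightarrow> complex \<Rightarrow> bool \<Rightarrow> complex poly \<Rightarrow> real \<Rightarrow> complex" where
  "wgt_poly M N t \<sigma> p x = indicator {0<..} x *\<^sub>R (poly p (complex_of_real x) * wgt M N t \<sigma> x)"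

definition skew_kernel :: "nat \<Rightarrow> nat \<Rightarrow> complex \<Rightarrow> bool \<Rightarrow> complex poly \<Rightarrow> complex poly \<Rightarrow> real \<times> real \<Rightarrow> complex" where
  "skew_kernel M N t \<sigma> f g = (\<lambda>(x, y). complex_of_real (sgn (x - y) / 2) * wgt_poly M N t \<sigma> f x * wgt_poly M N t \<sigma> g y)"

lemma borel_measurable_wgt_poly [measurable]: "wgt_poly M N t \<sigma> p \<in> borel_measurable lborel"
  unfolding wgt_poly_def[abs_def] by measurable

lemma borel_measurable_skew_kernel [measurable]:
  "skew_kernel M N t \<sigma> f g \<in> borel_measurable (lborel \<Otimes>\<^sub>M lborel)"
  unfolding skew_kernel_def by measurable

lemma integrable_wgt_poly: "N < M \<Longrightarrow> integrable lborel (wgt_poly M N t \<sigma> p)"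
  using poly_wgt_integrable unfolding set_integrable_def wgt_poly_def[abs_def] by blast

lemma skew_eq_iterated_integral:
  "skew M N t \<sigma> f g = (\<integral>y. (\<integral>x. skew_kernel M N t \<sigma> f g (x, y) \<partial>lborel) \<partial>lborel)"
  unfolding skew_def set_lebesgue_integral_def
proof (rule Bochner_Integration.integral_cong[OF refl])
  fix y
  have "indicator {0<..} y *\<^sub>R (\<integral>x. indicator {0<..} x *\<^sub>R (complex_of_real (sgn (x - y) / 2) * poly f (complex_of_real x) *
          poly g (complex_of_real y) * wgt M N t \<sigma> x * wgt M N t \<sigma> y) \<partial>lborel)
     = (\<integral>x. indicator {0<..} y *\<^sub>R (indicator {0<..} x *\<^sub>R (complex_of_real (sgn (x - y) / 2) * poly f (complex_of_real x) *
          poly g (complex_of_real y) * wgt M N t \<sigma> x * wgt M N t \<sigma> y)) \<partial>lborel)"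
    by (rule integral_scaleR_right[symmetric])
  also have "\<dots> = (\<integral>x. skew_kernel M N t \<sigma> f g (x, y) \<partial>lborel)"
    by (rule Bochner_Integration.integral_cong[OF refl]) (auto simp: skew_kernel_def wgt_poly_def indicator_def)
  finally show "indicator {0<..} y *\<^sub>R (\<integral>x. indicator {0<..} x *\<^sub>R (complex_of_real (sgn (x - y) / 2) * poly f (complex_of_real x) *
          poly g (complex_of_real y) * wgt M N t \<sigma> x * wgt M N t \<sigma> y) \<partial>lborel)
     = (\<integral>x. skew_kernel M N t \<sigma> f g (x, y) \<partial>lborel)" .
qed

lemma integrable_skew_kernel:
  assumes "N < M"
  shows "integrable (lborel \<Otimes>\<^sub>M lborel) (skew_kernel M N t \<sigma> f g)"
proof (rule Bochner_Integration.integrable_bound)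
  show "integrable (lborel \<Otimes>\<^sub>M lborel) (\<lambda>(x, y). norm (wgt_poly M N t \<sigma> f x) * norm (wgt_poly M N t \<sigma> g y))"
  proof (rule lborel_pair.Fubini_integrable)
    have "integrable lborel (\<lambda>x. norm (wgt_poly M N t \<sigma> f x) * (\<integral>y. norm (wgt_poly M N t \<sigma> g y) \<partial>lborel))"
      using integrable_wgt_poly[OF assms] by (intro integrable_mult_left integrable_norm)
    then show "integrable lborel (\<lambda>x. \<integral>y. norm (case (x, y) of (x, y) \<Rightarrow> norm (wgt_poly M N t \<sigma> f x) * norm (wgt_poly M N t \<sigma> g y)) \<partial>lborel)"
      by simp
    show "AE x in lborel. integrable lborel (\<lambda>y. case (x, y) of (x, y) \<Rightarrow> norm (wgt_poly M N t \<sigma> f x) * norm (wgt_poly M N t \<sigma> g y))"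
      using integrable_wgt_poly[OF assms] by (auto intro!: integrable_mult_right integrable_norm)
  qed measurable
  show "AE z in lborel \<Otimes>\<^sub>M lborel. norm (skew_kernel M N t \<sigma> f g z)
      \<le> norm (case z of (x, y) \<Rightarrow> norm (wgt_poly M N t \<sigma> f x) * norm (wgt_poly M N t \<sigma> g y))"
  proof (rule AE_I2)
    fix z :: "real \<times> real"
    obtain x y where z: "z = (x, y)" by (cases z)
    have "\<bar>sgn (x - y) / 2\<bar> \<le> (1::real)" by (simp add: sgn_if)
    then show "norm (skew_kernel M N t \<sigma> f g z) \<le> norm (case z of (x, y) \<Rightarrow> norm (wgt_poly M N t \<sigma> f x) * norm (wgt_poly M N t \<sigma> g y))"
      by (simp add: z skew_kernel_def norm_mult mult_right_mono mult.assoc)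
  qed
qed measurable

lemma skew_eq_pair_integral:
  assumes "N < M"
  shows "skew M N t \<sigma> f g = integral\<^sup>L (lborel \<Otimes>\<^sub>M lborel) (skew_kernel M N t \<sigma> f g)"
  using lborel_pair.integral_snd[of "\<lambda>x y. skew_kernel M N t \<sigma> f g (x, y)"] integrable_skew_kernel[OF assms]
  by (simp add: skew_eq_iterated_integral)

lemma skew_swap:
  assumes "N < M"
  shows "skew M N t \<sigma> g f = - skew M N t \<sigma> f g"
proof -
  have "skew M N t \<sigma> g f = (\<integral>(x, y). skew_kernel M N t \<sigma> g f (y, x) \<partial>(lborel \<Otimes>\<^sub>M lborel))"
    unfolding skew_eq_pair_integral[OF assms] by (rule lborel_pair.integral_product_swap[symmetric]) measurable
  also have "\<dots> = (\<integral>z. - skew_kernel M N t \<sigma> f g z \<partial>(lborel \<Otimes>\<^sub>M lborel))"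
    by (rule Bochner_Integration.integral_cong) (auto simp: skew_kernel_def sgn_if)
  also have "\<dots> = - skew M N t \<sigma> f g"
    unfolding skew_eq_pair_integral[OF assms] by (rule Bochner_Integration.integral_minus)
  finally show ?thesis .
qed

lemma skew_lincomb_left:
  assumes "N < M"
  shows "skew M N t \<sigma> (smult a p + smult b q) g = a * skew M N t \<sigma> p g + b * skew M N t \<sigma> q g"
proof -
  have "skew_kernel M N t \<sigma> (smult a p + smult b q) g = (\<lambda>z. a * skew_kernel M N t \<sigma> p g z + b * skew_kernel M N t \<sigma> q g z)"
    by (auto simp: skew_kernel_def wgt_poly_def indicator_def algebra_simps)
  then show ?thesis
    using integrable_skew_kernel[OF assms]
    by (simp add: skew_eq_pair_integral[OF assms] Bochner_Integration.integral_add)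
qed

lemma skew_Dop_eq_integral_primitive:
  assumes "N < M"
  shows "skew M N t \<sigma> (Dop M N t \<sigma> q) g =
    - (LINT y:{0<..}|lborel. poly g (complex_of_real y) * wgt M N t \<sigma> y * Dop_primitive M N t \<sigma> q y)"
proof -
  have "(\<integral>x. skew_kernel M N t \<sigma> (Dop M N t \<sigma> q) g (x, y) \<partial>lborel)
      = indicator {0<..} y *\<^sub>R (- (poly g (complex_of_real y) * wgt M N t \<sigma> y * Dop_primitive M N t \<sigma> q y))" for y
  proof -
    have "(\<integral>x. skew_kernel M N t \<sigma> (Dop M N t \<sigma> q) g (x, y) \<partial>lborel)
        = (\<integral>x. complex_of_real (sgn (x - y) / 2) * wgt_poly M N t \<sigma> (Dop M N t \<sigma> q) x \<partial>lborel) * wgt_poly M N t \<sigma> g y"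
      unfolding skew_kernel_def by (simp add: integral_mult_left_zero)
    also have "\<dots> = indicator {0<..} y *\<^sub>R (- (poly g (complex_of_real y) * wgt M N t \<sigma> y * Dop_primitive M N t \<sigma> q y))"
    proof (cases "y > 0")
      case True
      have "(\<integral>x. complex_of_real (sgn (x - y) / 2) * wgt_poly M N t \<sigma> (Dop M N t \<sigma> q) x \<partial>lborel)
          = (LINT x:{0<..}|lborel. complex_of_real (sgn (x - y) / 2) *
            (poly (Dop M N t \<sigma> q) (complex_of_real x) * wgt M N t \<sigma> x))"
        unfolding set_lebesgue_integral_def
        by (rule Bochner_Integration.integral_cong[OF refl]) (auto simp: wgt_poly_def indicator_def)
      also have "\<dots> = - Dop_primitive M N t \<sigma> q y" by (rule integral_sgn_Dop_wgt[OF assms True])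
      finally show ?thesis using True by (simp add: wgt_poly_def algebra_simps)
    qed (simp add: wgt_poly_def)
    finally show ?thesis .
  qed
  then show ?thesis
    by (simp add: skew_eq_iterated_integral set_lebesgue_integral_def)
qed

lemma skew_Dop:
  assumes "N < M"
  shows "skew M N t \<sigma> (Dop M N t \<sigma> q) g =
    - (LINT x:{0<..}|lborel. poly q (complex_of_real x) * poly g (complex_of_real x) * complex_of_real (w0 M N x))"
proof -
  have "(LINT y:{0<..}|lborel. poly g (complex_of_real y) * wgt M N t \<sigma> y * Dop_primitive M N t \<sigma> q y)
      = (LINT y:{0<..}|lborel. poly q (complex_of_real y) * poly g (complex_of_real y) * complex_of_real (w0 M N y))"
  proof (rule set_lebesgue_integral_cong_AE)
    show "AE y\<in>{0<..} in lborel. poly g (complex_of_real y) * wgt M N t \<sigma> y * Dop_primitive M N t \<sigma> q y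
        = poly q (complex_of_real y) * poly g (complex_of_real y) * complex_of_real (w0 M N y)"
      using AE_lborel_singleton[of "Re t"]
    proof eventually_elim
      case (elim y)
      show ?case
      proof
        assume "y \<in> {0<..}"
        moreover have "t - complex_of_real y \<noteq> 0" using elim by (auto simp: complex_eq_iff)
        ultimately show "poly g (complex_of_real y) * wgt M N t \<sigma> y * Dop_primitive M N t \<sigma> q y
            = poly q (complex_of_real y) * poly g (complex_of_real y) * complex_of_real (w0 M N y)"
          using wgt_square[OF assms, of y t \<sigma>]
          by (simp add: Dop_primitive_def power2_eq_square mult_ac)
      qed
    qed
  qed (auto simp: Dop_primitive_def[abs_def] w0_def[abs_def])
  then show ?thesis by (simp add: skew_Dop_eq_integral_primitive[OF assms])
qed

section \<open>Invertibility of \<open>\<rho>\<^sub>k\<close>\<close>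

lemma fmap_lincomb_eq_0_imp:
  fixes L :: "nat \<Rightarrow> complex poly"
  assumes "N < M" "1 \<le> k"
    and L_monic: "\<And>j. degree (L j) = j \<and> lead_coeff (L j) = 1"
    and L_orth: "\<And>j p. degree p < j \<Longrightarrow>
        (LINT x:{0<..}|lborel. poly (L j) (complex_of_real x) * poly p (complex_of_real x)
           * complex_of_real (w0 M N x)) = 0"
    and nz: "skew M N t \<sigma> (L k) (L (k - 1)) \<noteq> 0"
    and "fmap M N t \<sigma> (smult a (L k) + smult b (L (k - 1))) = 0"
  shows "a = 0 \<and> b = 0"
proof -
  have M: "M > 0" using assms(1) by simp
  define P where "P = smult a (L k) + smult b (L (k - 1))"
  obtain q R where "degree R \<le> 1" "P = Dop M N t \<sigma> q + R" using Dop_decomposition[OF M] by blast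
  moreover from this have "R = 0" using fmap_eqI[OF M] assms(6) by (simp add: P_def)
  ultimately have P: "P = Dop M N t \<sigma> q" by simp
  \<comment> \<open>\<open>P = D q\<close> has degree at most \<open>k\<close>, so \<open>deg q \<le> k - 2\<close> and \<open>q\<close> is orthogonal to \<open>L\<^sub>k\<close> and \<open>L\<^sub>k\<^sub>-\<^sub>1\<close>\<close>
  have "degree P \<le> k"
    unfolding P_def using L_monic[of k] L_monic[of "k - 1"]
    by (intro degree_add_le order.trans[OF degree_smult_le]) auto
  have q: "q = 0 \<or> degree q < k - 1"
  proof (cases "q = 0")
    case False
    then show ?thesis using degree_Dop[OF M False] P \<open>degree P \<le> k\<close> by simp
  qed simp
  have orth: "skew M N t \<sigma> P (L j) = 0" if "k - 1 \<le> j" for j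
  proof -
    have "(LINT x:{0<..}|lborel. poly (L j) (complex_of_real x) * poly q (complex_of_real x)
        * complex_of_real (w0 M N x)) = 0"
      using q that L_orth[of q j] by auto
    then show ?thesis by (simp add: P skew_Dop[OF assms(1)] mult.commute mult.left_commute)
  qed
  have lin: "skew M N t \<sigma> P g = a * skew M N t \<sigma> (L k) g + b * skew M N t \<sigma> (L (k - 1)) g" for g
    unfolding P_def by (rule skew_lincomb_left[OF assms(1)])
  have self: "skew M N t \<sigma> g g = 0" for g
    using skew_swap[OF assms(1), of t \<sigma> g g] by simp
  have "a * skew M N t \<sigma> (L k) (L (k - 1)) = 0"
    using orth[of "k - 1"] lin[of "L (k - 1)"] self by simp
  then have "a = 0" using nz by simp
  moreover have "b * skew M N t \<sigma> (L (k - 1)) (L k) = 0"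
    using orth[of k] lin[of "L k"] self \<open>a = 0\<close> by simp
  then have "b = 0" using nz skew_swap[OF assms(1), of t \<sigma> "L (k - 1)" "L k"] by simp
  ultimately show ?thesis by simp
qed

theorem lemma1:
  fixes M N k :: nat and t :: complex and \<sigma> :: bool and L :: "nat \<Rightarrow> complex poly"
  assumes "0 < N" and "N < M" and "1 \<le> k"
    and L_monic: "\<And>j. degree (L j) = j \<and> lead_coeff (L j) = 1"
    and L_orth: "\<And>j p. degree p < j \<Longrightarrow>
        (LINT x:{0<..}|lborel. poly (L j) (complex_of_real x) * poly p (complex_of_real x)
           * complex_of_real (w0 M N x)) = 0"
    and nz: "skew M N t \<sigma> (L k) (L (k - 1)) \<noteq> 0"
  shows "(\<forall>P. \<exists>!(q, R). degree R \<le> 1 \<and> P = Dop M N t \<sigma> q + R)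
         \<and> bij_betw (fmap M N t \<sigma>)
             {smult a (L k) + smult b (L (k - 1)) | a b. True} {R. degree R \<le> 1}"
proof -
  have M: "M > 0" using assms(2) by simp
  have indep: "a = 0 \<and> b = 0"
    if "smult a (fmap M N t \<sigma> (L k)) + smult b (fmap M N t \<sigma> (L (k - 1))) = 0" for a b
  proof (rule fmap_lincomb_eq_0_imp[OF assms(2-6)])
    show "fmap M N t \<sigma> (smult a (L k) + smult b (L (k - 1))) = 0"
      using that fmap_lincomb[OF M, of N t \<sigma> a "L k" b "L (k - 1)"] by simp
  qed
  show ?thesis
    using ex1_Dop_decomposition[OF M]
      bij_betw_span_degree_le_1[of "fmap M N t \<sigma>" "L k" "L (k - 1)",
        OF fmap_lincomb[OF M] degree_fmap[OF M] degree_fmap[OF M] indep]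
    by blast
qed

end
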